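(* Consider the system of delay differential equations \[ \begin{cases} x'(t)=s-dx(t)-kx(t)v(t),\\ y'(t)=k_{d}\int_{0}^{h_{1}}f_{1}(\tau)x(t-\tau)v(t-\tau)\,d\tau-\delta y(t)-py(t)z(t),\\ v'(t)=N_{d}\delta\int_{0}^{h_{2}}f_{2}(\tau)y(t-\tau)\,d\tau-\mu v(t),\\ z'(t)=qy(t)z(t)-bz(t), \end{cases} \] with initial conditions $x(\theta)=\varphi_{1}(\theta)$, $y(\theta)=\varphi_{2}(\theta)$, $v(\theta)=\varphi_{3}(\theta)$ for $\theta\in[-\overline{h},0]$ and $z(0)=z_{0}$, where $\varphi_{i}\in C([-\overline{h},0],\mathbb{R}_{+})$, $i=1,2,3$, and $z_{0}\geq0$. Then every solution is nonnegative for $t>0$. Moreover, every solution is positive for $t>\overline{h}$ if $z_{0}>0$ and either (i) $\varphi_{2}(0)+\int_{0}^{h_{1}}f_{1}(\tau)\varphi_{1}(-\tau)\varphi_{3}(-\tau)\,d\tau>0$, or (ii) $\varphi_{3}(0)+\int_{0}^{h_{2}}f_{2}(\tau)\varphi_{2}(-\tau)\,d\tau>0$. Furthermore, every solution is bounded above by some positive constant for sufficiently large $t$.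
   Context: All parameters $s,d,k,k_d,\delta,p,N_d,\mu,q,b$ are positive constants. $h_1,h_2>0$, $\overline{h}=\max\{h_1,h_2\}$, and $f_1:[0,h_1]\to\mathbb{R}_+$, $f_2:[0,h_2]\to\mathbb{R}_+$ are integrable functions with $\int_0^{h_1}f_1(\tau)d\tau=\int_0^{h_2}f_2(\tau)d\tau=1$. $C([-\overline{h},0],\mathbb{R}_+)$ denotes the continuous nonnegative functions on $[-\overline{h},0]$ with the sup-norm. *)

theory Defs
  imports "HOL-Analysis.Analysis"
begin

definition ddesol ::
  "real \<Rightarrow> real \<Rightarrow> real \<Rightarrow> real \<Rightarrow> real \<Rightarrow> real \<Rightarrow> real \<Rightarrow> real \<Rightarrow> real \<Rightarrow> real \<Rightarrow>
   real \<Rightarrow> real \<Rightarrow> (real \<Rightarrow> real) \<Rightarrow> (real \<Rightarrow> real) \<Rightarrow>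
   (real \<Rightarrow> real) \<Rightarrow> (real \<Rightarrow> real) \<Rightarrow> (real \<Rightarrow> real) \<Rightarrow> real \<Rightarrow>
   (real \<Rightarrow> real) \<Rightarrow> (real \<Rightarrow> real) \<Rightarrow> (real \<Rightarrow> real) \<Rightarrow> (real \<Rightarrow> real) \<Rightarrow> bool"
where
  "ddesol s d k kd \<delta> p Nd \<mu> q b h1 h2 f1 f2 \<phi>1 \<phi>2 \<phi>3 z0 x y v z \<longleftrightarrow>
    (let hb = max h1 h2 in
      continuous_on {-hb..} x \<and> continuous_on {-hb..} y \<and> continuous_on {-hb..} v \<and>
      continuous_on {0..} z \<and>
      (\<forall>\<theta>\<in>{-hb..0}. x \<theta> = \<phi>1 \<theta> \<and> y \<theta> = \<phi>2 \<theta> \<and> v \<theta> = \<phi>3 \<theta>) \<and>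
      z 0 = z0 \<and>
      (\<forall>t>0.
        (x has_real_derivative (s - d * x t - k * x t * v t)) (at t) \<and>
        (y has_real_derivative
           (kd * integral {0..h1} (\<lambda>\<tau>. f1 \<tau> * x (t - \<tau>) * v (t - \<tau>))
            - \<delta> * y t - p * y t * z t)) (at t) \<and>
        (v has_real_derivative
           (Nd * \<delta> * integral {0..h2} (\<lambda>\<tau>. f2 \<tau> * y (t - \<tau>)) - \<mu> * v t)) (at t) \<and>
        (z has_real_derivative (q * y t * z t - b * z t)) (at t)))"

end

theory Submission
  imports Defs
begin

text \<open>
  The x equation reads x' = s - (d + k v) x with s > 0, so x > 0 for t > 0, and
  z' = (q y - b) z gives z = z0 exp (\<integral>(q y - b)) \<ge> 0. The components y and v feed each
  other through the delay integrals, so their signs are controlled jointly: perturb both by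
  \<epsilon> e^(L t). At the first time one perturbed component vanishes, its derivative must be \<le> 0,
  while the delayed source terms are bounded below by a multiple of -\<epsilon> e^(L t) that L
  dominates. Letting \<epsilon> \<rightarrow> 0 gives y, v \<ge> 0.

  For positivity, condition (i) makes y positive immediately, hence for all t > 0 (y solves a
  linear equation with nonnegative source); then the source of v is positive after h2.
  Condition (ii) is symmetric.

  For boundedness, W = (kd/k) \<integral> f1(\<tau>) x(t-\<tau>) d\<tau> + y + (p/q) z satisfies
  W' \<le> kd s/k - min d \<delta> b \<cdot> W, which bounds y and z; then x \<le> max (x 1) (s/d), and v is
  bounded through its delayed source.
\<close>

section \<open>Distributed delays\<close>

definition distributed_delay :: "(real \<Rightarrow> real) \<Rightarrow> real \<Rightarrow> (real \<Rightarrow> real) \<Rightarrow> real \<Rightarrow> real" where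
  "distributed_delay f h g t = integral {0..h} (\<lambda>\<tau>. f \<tau> * g (t - \<tau>))"

lemma integrable_nonneg_mult_continuous:
  fixes f g :: "real \<Rightarrow> real"
  assumes "f integrable_on {a..b}" "\<forall>\<tau>\<in>{a..b}. 0 \<le> f \<tau>" "continuous_on {a..b} g"
  shows "(\<lambda>\<tau>. f \<tau> * g \<tau>) integrable_on {a..b}"
proof -
  have "f absolutely_integrable_on {a..b}"
    using assms(1,2) nonnegative_absolutely_integrable_1 by blast
  moreover have "g \<in> borel_measurable (lebesgue_on {a..b})"
    using continuous_imp_measurable_on_sets_lebesgue[OF assms(3)] by simp
  moreover have "bounded (g ` {a..b})"
    using compact_continuous_image[OF assms(3)] compact_imp_bounded by blast
  ultimately have "(\<lambda>\<tau>. g \<tau> * f \<tau>) absolutely_integrable_on {a..b}"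
    by (intro absolutely_integrable_bounded_measurable_product_real) auto
  then show ?thesis by (simp add: absolutely_integrable_on_def mult.commute)
qed

lemma mvt_increment:
  fixes g g' :: "real \<Rightarrow> real"
  assumes "e \<noteq> 0" "\<And>w. \<bar>w - u\<bar> \<le> \<bar>e\<bar> \<Longrightarrow> (g has_real_derivative g' w) (at w)"
  shows "\<exists>\<xi>. \<bar>\<xi> - u\<bar> < \<bar>e\<bar> \<and> g (u + e) - g u = e * g' \<xi>"
proof (cases "0 < e")
  case True
  have "\<exists>\<xi>>u. \<xi> < u + e \<and> g (u + e) - g u = (u + e - u) * g' \<xi>"
    using True by (intro MVT2 assms(2)) (auto simp: abs_if)
  then show ?thesis
    using True by force
next
  case False
  then have "e < 0"
    using assms(1) by simp
  have "\<exists>\<xi>>u + e. \<xi> < u \<and> g u - g (u + e) = (u - (u + e)) * g' \<xi>"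
    using \<open>e < 0\<close> by (intro MVT2 assms(2)) (auto simp: abs_if)
  then obtain \<xi> where "u + e < \<xi>" "\<xi> < u" "g u - g (u + e) = - e * g' \<xi>"
    by auto
  then show ?thesis
    using \<open>e < 0\<close> by (intro exI[of _ \<xi>]) (simp add: algebra_simps)
qed

lemma difference_quotient_le:
  fixes g g' :: "real \<Rightarrow> real"
  assumes "e \<noteq> 0" "\<And>w. \<bar>w - u\<bar> \<le> \<bar>e\<bar> \<Longrightarrow> (g has_real_derivative g' w) (at w)"
    and "\<And>\<xi>. \<bar>\<xi> - u\<bar> < \<bar>e\<bar> \<Longrightarrow> \<bar>g' \<xi> - g' u\<bar> \<le> m"
  shows "\<bar>inverse e * (g (u + e) - g u) - g' u\<bar> \<le> m"
proof -
  obtain \<xi> where "\<bar>\<xi> - u\<bar> < \<bar>e\<bar>" "g (u + e) - g u = e * g' \<xi>"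
    using mvt_increment[OF assms(1,2)] by blast
  then show ?thesis
    using assms(1,3) by (simp add: mult.assoc[symmetric])
qed

locale delay_kernel =
  fixes f :: "real \<Rightarrow> real" and h :: real
  assumes nonneg: "\<forall>\<tau>\<in>{0..h}. 0 \<le> f \<tau>"
    and integrable: "f integrable_on {0..h}"
    and unit_mass: "integral {0..h} f = 1"
begin

lemma length_pos: "0 < h"
proof (rule ccontr)
  assume "\<not> 0 < h"
  then have "(f has_integral 0) {0..h}" by (intro has_integral_null_real) simp
  from integral_unique[OF this] unit_mass show False
    by simp
qed

lemma integrable_delay:
  assumes "continuous_on {t-h..t} g"
  shows "(\<lambda>\<tau>. f \<tau> * g (t - \<tau>)) integrable_on {0..h}"
proof (rule integrable_nonneg_mult_continuous[OF integrable nonneg])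
  have "continuous_on {0..h} (\<lambda>\<tau>. t - \<tau>)"
    by (intro continuous_intros)
  moreover have "(\<lambda>\<tau>. t - \<tau>) ` {0..h} \<subseteq> {t-h..t}"
    by auto
  ultimately show "continuous_on {0..h} (\<lambda>\<tau>. g (t - \<tau>))"
    by (rule continuous_on_compose2[OF assms])
qed

lemma distributed_delay_const [simp]: "distributed_delay f h (\<lambda>_. c) t = c"
  using unit_mass by (simp add: distributed_delay_def)

lemma distributed_delay_cmult: "distributed_delay f h (\<lambda>u. c * g u) t = c * distributed_delay f h g t"
  unfolding distributed_delay_def by (simp only: mult.left_commute[of "f _"] integral_mult_right)

lemma distributed_delay_diff:
  assumes "continuous_on {t-h..t} g1" "continuous_on {t-h..t} g2"
  shows "distributed_delay f h (\<lambda>u. g1 u - g2 u) t = distributed_delay f h g1 t - distributed_delay f h g2 t"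
  unfolding distributed_delay_def right_diff_distrib
  by (intro integral_diff integrable_delay assms)

lemma distributed_delay_mono:
  assumes "continuous_on {t-h..t} g1" "continuous_on {t-h..t} g2" "\<forall>u\<in>{t-h..t}. g1 u \<le> g2 u"
  shows "distributed_delay f h g1 t \<le> distributed_delay f h g2 t"
  unfolding distributed_delay_def
  by (intro integral_le integrable_delay assms mult_left_mono) (use assms(3) nonneg in auto)

lemma distributed_delay_ge:
  assumes "continuous_on {t-h..t} g" "\<forall>u\<in>{t-h..t}. m \<le> g u"
  shows "m \<le> distributed_delay f h g t"
  using distributed_delay_mono[of t "\<lambda>_. m" g] assms by simp

lemma distributed_delay_le:
  assumes "continuous_on {t-h..t} g" "\<forall>u\<in>{t-h..t}. g u \<le> m"
  shows "distributed_delay f h g t \<le> m"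
  using distributed_delay_mono[of t g "\<lambda>_. m"] assms by simp

lemma distributed_delay_pos:
  assumes "continuous_on {t-h..t} g" "\<forall>u\<in>{t-h..t}. 0 < g u"
  shows "0 < distributed_delay f h g t"
proof -
  obtain u0 where u0: "u0 \<in> {t-h..t}" "\<forall>u\<in>{t-h..t}. g u0 \<le> g u"
    using continuous_attains_inf[OF compact_Icc _ assms(1)] length_pos by auto
  then have "g u0 \<le> distributed_delay f h g t"
    by (intro distributed_delay_ge assms(1)) auto
  moreover have "0 < g u0"
    using u0(1) assms(2) by blast
  ultimately show ?thesis
    by linarith
qed

lemma abs_distributed_delay_le:
  assumes "continuous_on {t-h..t} g" "\<forall>u\<in>{t-h..t}. \<bar>g u\<bar> \<le> m"
  shows "\<bar>distributed_delay f h g t\<bar> \<le> m"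
proof -
  have "-m \<le> distributed_delay f h g t" "distributed_delay f h g t \<le> m"
    using assms by (intro distributed_delay_ge distributed_delay_le ballI; fastforce simp: abs_le_iff)+
  then show ?thesis
    by linarith
qed

lemma distributed_delay_shift: "distributed_delay f h (\<lambda>u. g (u + e)) t = distributed_delay f h g (t + e)"
  by (simp add: distributed_delay_def algebra_simps)

lemma continuous_on_distributed_delay:
  assumes "continuous_on {a..b} g"
  shows "continuous_on {a+h..b} (distributed_delay f h g)"
  unfolding continuous_on_iff
proof (intro ballI allI impI)
  fix t e :: real assume t: "t \<in> {a+h..b}" and "0 < e"
  obtain r where r: "0 < r" "\<forall>u\<in>{a..b}. \<forall>u'\<in>{a..b}. dist u' u < r \<longrightarrow> dist (g u') (g u) < e/2"
    using compact_uniformly_continuous[OF assms compact_Icc] \<open>0 < e\<close>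
    unfolding uniformly_continuous_on_def by (metis half_gt_zero)
  show "\<exists>r>0. \<forall>t'\<in>{a+h..b}. dist t' t < r \<longrightarrow>
          dist (distributed_delay f h g t') (distributed_delay f h g t) < e"
  proof (intro exI[of _ r] conjI ballI impI)
    show "0 < r"
      by (fact r(1))
    fix t' assume t': "t' \<in> {a+h..b}" "dist t' t < r"
    have sub: "{t-h..t} \<subseteq> {a..b}" "(\<lambda>u. u + (t' - t)) ` {t-h..t} \<subseteq> {a..b}"
      using t t' by auto
    have cont_g: "continuous_on {t-h..t} g"
      using continuous_on_subset[OF assms sub(1)] .
    have cont_shift: "continuous_on {t-h..t} (\<lambda>u. g (u + (t' - t)))"
      by (rule continuous_on_compose2[OF assms _ sub(2)]) (intro continuous_intros)
    have "\<bar>g (u + (t' - t)) - g u\<bar> \<le> e/2" if "u \<in> {t-h..t}" for u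
    proof -
      have "u \<in> {a..b}" "u + (t' - t) \<in> {a..b}" "dist (u + (t' - t)) u < r"
        using that sub t'(2) by (auto simp: dist_real_def)
      then have "dist (g (u + (t' - t))) (g u) < e/2"
        using r(2) by blast
      then show ?thesis
        by (simp add: dist_real_def)
    qed
    then have "\<bar>distributed_delay f h (\<lambda>u. g (u + (t' - t)) - g u) t\<bar> \<le> e/2"
      by (intro abs_distributed_delay_le continuous_intros cont_shift cont_g ballI)
    moreover have "distributed_delay f h (\<lambda>u. g (u + (t' - t)) - g u) t
        = distributed_delay f h g t' - distributed_delay f h g t"
      by (simp add: distributed_delay_diff[OF cont_shift cont_g] distributed_delay_shift)
    ultimately show "dist (distributed_delay f h g t') (distributed_delay f h g t) < e"
      using \<open>0 < e\<close> by (simp add: dist_real_def)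
  qed
qed

lemma distributed_delay_difference_quotient:
  assumes "continuous_on {t-h..t} g" "continuous_on {t-h..t} (\<lambda>u. g (u + e))"
    and "continuous_on {t-h..t} g'"
  shows "(distributed_delay f h g (t + e) - distributed_delay f h g t) / e - distributed_delay f h g' t
    = distributed_delay f h (\<lambda>u. inverse e * (g (u + e) - g u) - g' u) t"
proof -
  have cont_diff: "continuous_on {t-h..t} (\<lambda>u. g (u + e) - g u)"
    by (intro continuous_intros assms(1,2))
  have "distributed_delay f h (\<lambda>u. inverse e * (g (u + e) - g u) - g' u) t
      = inverse e * distributed_delay f h (\<lambda>u. g (u + e) - g u) t - distributed_delay f h g' t"
    by (subst distributed_delay_diff) (auto intro: continuous_intros cont_diff assms(3) simp: distributed_delay_cmult)
  then show ?thesis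
    by (simp add: distributed_delay_diff[OF assms(2,1)] distributed_delay_shift divide_inverse_commute)
qed

lemma has_real_derivative_distributed_delay:
  assumes "0 < r"
    and deriv: "\<forall>u\<in>{t-h-r..t+r}. (g has_real_derivative g' u) (at u)"
    and cont': "continuous_on {t-h-r..t+r} g'"
  shows "(distributed_delay f h g has_real_derivative distributed_delay f h g' t) (at t)"
  unfolding DERIV_def LIM_eq
proof (intro allI impI)
  fix \<epsilon> :: real assume "0 < \<epsilon>"
  define K where "K = {t-h-r..t+r}"
  have cont: "continuous_on K g"
    unfolding K_def using deriv by (meson DERIV_isCont continuous_at_imp_continuous_on)
  obtain \<rho> where \<rho>: "0 < \<rho>" "\<forall>u\<in>K. \<forall>u'\<in>K. dist u' u < \<rho> \<longrightarrow> dist (g' u') (g' u) < \<epsilon>/2"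
    using compact_uniformly_continuous[OF cont' compact_Icc] \<open>0 < \<epsilon>\<close>
    unfolding uniformly_continuous_on_def K_def by (metis half_gt_zero)
  show "\<exists>s>0. \<forall>e. e \<noteq> 0 \<and> norm (e - 0) < s \<longrightarrow>
    norm ((distributed_delay f h g (t + e) - distributed_delay f h g t) / e - distributed_delay f h g' t) < \<epsilon>"
  proof (intro exI[of _ "min \<rho> r"] conjI allI impI)
    show "0 < min \<rho> r"
      using \<rho>(1) \<open>0 < r\<close> by simp
    fix e :: real assume e: "e \<noteq> 0 \<and> norm (e - 0) < min \<rho> r"
    have sub: "{t-h..t} \<subseteq> K" "(\<lambda>u. u + e) ` {t-h..t} \<subseteq> K"
      using e by (auto simp: K_def)
    have cont_g: "continuous_on {t-h..t} g"
      using continuous_on_subset[OF cont sub(1)] .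
    have cont_g': "continuous_on {t-h..t} g'"
      using continuous_on_subset[OF cont'] sub(1) unfolding K_def .
    have cont_shift: "continuous_on {t-h..t} (\<lambda>u. g (u + e))"
      by (rule continuous_on_compose2[OF cont _ sub(2)]) (intro continuous_intros)
    define q where "q u = inverse e * (g (u + e) - g u) - g' u" for u
    have "\<bar>q u\<bar> \<le> \<epsilon>/2" if u: "u \<in> {t-h..t}" for u
      unfolding q_def
    proof (rule difference_quotient_le)
      show "e \<noteq> 0"
        using e by simp
      fix w assume "\<bar>w - u\<bar> \<le> \<bar>e\<bar>"
      then have "w \<in> {t-h-r..t+r}"
        using u e by (auto simp: abs_if split: if_splits)
      then show "(g has_real_derivative g' w) (at w)"
        using deriv by blast
    next
      fix \<xi> assume "\<bar>\<xi> - u\<bar> < \<bar>e\<bar>"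
      then have "\<xi> \<in> K" "u \<in> K" "dist \<xi> u < \<rho>"
        using u e by (auto simp: K_def dist_real_def abs_if split: if_splits)
      then have "dist (g' \<xi>) (g' u) < \<epsilon>/2"
        using \<rho>(2) by blast
      then show "\<bar>g' \<xi> - g' u\<bar> \<le> \<epsilon>/2"
        by (simp add: dist_real_def)
    qed
    then have "\<bar>distributed_delay f h q t\<bar> \<le> \<epsilon>/2"
      unfolding q_def by (intro abs_distributed_delay_le continuous_intros cont_g cont_shift cont_g' ballI)
    moreover have "(distributed_delay f h g (t + e) - distributed_delay f h g t) / e
        - distributed_delay f h g' t = distributed_delay f h q t"
      unfolding q_def by (rule distributed_delay_difference_quotient[OF cont_g cont_shift cont_g'])
    ultimately show "norm ((distributed_delay f h g (t + e) - distributed_delay f h g t) / e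
        - distributed_delay f h g' t) < \<epsilon>"
      using \<open>0 < \<epsilon>\<close> by simp
  qed
qed

end

section \<open>Scalar differential inequalities\<close>

lemma integrating_factor_deriv:
  fixes u a c :: "real \<Rightarrow> real"
  assumes "continuous_on {t0..t1} u" "continuous_on {t0..t1} c"
    and deriv: "\<forall>t\<in>{t0<..<t1}. (u has_real_derivative a t - c t * u t) (at t)"
  shows "continuous_on {t0..t1} (\<lambda>t. u t * exp (integral {t0..t} c))"
    and "\<forall>t\<in>{t0<..<t1}. ((\<lambda>t. u t * exp (integral {t0..t} c)) has_real_derivative
           a t * exp (integral {t0..t} c)) (at t)"
proof -
  show "continuous_on {t0..t1} (\<lambda>t. u t * exp (integral {t0..t} c))"
    using assms(1,2) by (intro continuous_intros indefinite_integral_continuous_1 integrable_continuous_real)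
  show "\<forall>t\<in>{t0<..<t1}. ((\<lambda>t. u t * exp (integral {t0..t} c)) has_real_derivative
           a t * exp (integral {t0..t} c)) (at t)"
  proof
    fix t assume t: "t \<in> {t0<..<t1}"
    have "((\<lambda>s. integral {t0..s} c) has_real_derivative c t) (at t within {t0..t1})"
      using t by (intro integral_has_real_derivative assms(2)) auto
    moreover have "at t within {t0..t1} = at t"
      using t by (intro at_within_interior) auto
    ultimately have "((\<lambda>s. integral {t0..s} c) has_real_derivative c t) (at t)"
      by simp
    with deriv t show "((\<lambda>t. u t * exp (integral {t0..t} c)) has_real_derivative
           a t * exp (integral {t0..t} c)) (at t)"
      by (auto intro!: derivative_eq_intros simp: algebra_simps)
  qed
qed

lemma linear_ode_nonneg:
  fixes u a c :: "real \<Rightarrow> real"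
  assumes "t0 \<le> t1" "continuous_on {t0..t1} u" "continuous_on {t0..t1} c"
    and "\<forall>t\<in>{t0<..<t1}. (u has_real_derivative a t - c t * u t) (at t)"
    and "\<forall>t\<in>{t0<..<t1}. 0 \<le> a t" "0 \<le> u t0"
  shows "0 \<le> u t1"
proof -
  note F = integrating_factor_deriv[OF assms(2-4)]
  have "u t0 * exp (integral {t0..t0} c) \<le> u t1 * exp (integral {t0..t1} c)"
    using F(2) assms(5) by (intro DERIV_nonneg_imp_increasing_open[OF assms(1) _ F(1)]) force
  with assms(6) have "0 \<le> u t1 * exp (integral {t0..t1} c)"
    by simp
  then show ?thesis
    by (simp add: zero_le_mult_iff)
qed

lemma linear_ode_pos:
  fixes u a c :: "real \<Rightarrow> real"
  assumes "t0 \<le> t1" "continuous_on {t0..t1} u" "continuous_on {t0..t1} c"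
    and "\<forall>t\<in>{t0<..<t1}. (u has_real_derivative a t - c t * u t) (at t)"
    and "\<forall>t\<in>{t0<..<t1}. 0 \<le> a t" "0 < u t0"
  shows "0 < u t1"
proof -
  note F = integrating_factor_deriv[OF assms(2-4)]
  have "u t0 * exp (integral {t0..t0} c) \<le> u t1 * exp (integral {t0..t1} c)"
    using F(2) assms(5) by (intro DERIV_nonneg_imp_increasing_open[OF assms(1) _ F(1)]) force
  with assms(6) have "0 < u t1 * exp (integral {t0..t1} c)"
    by simp
  then show ?thesis
    by (simp add: zero_less_mult_iff)
qed

lemma linear_ode_pos_of_source_pos:
  fixes u a c :: "real \<Rightarrow> real"
  assumes "t0 < t1" "continuous_on {t0..t1} u" "continuous_on {t0..t1} c"
    and "\<forall>t\<in>{t0<..<t1}. (u has_real_derivative a t - c t * u t) (at t)"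
    and "\<forall>t\<in>{t0<..<t1}. 0 < a t" "0 \<le> u t0"
  shows "0 < u t1"
proof -
  note F = integrating_factor_deriv[OF assms(2-4)]
  have "u t0 * exp (integral {t0..t0} c) < u t1 * exp (integral {t0..t1} c)"
    using F(2) assms(5) by (intro DERIV_pos_imp_increasing_open[OF assms(1) _ F(1)]) force
  with assms(6) have "0 < u t1 * exp (integral {t0..t1} c)"
    by simp
  then show ?thesis
    by (simp add: zero_less_mult_iff)
qed

lemma le_max_of_deriv_le_affine:
  fixes W W' :: "real \<Rightarrow> real"
  assumes "0 < m"
    and deriv: "\<forall>t\<ge>t0. (W has_real_derivative W' t) (at t)"
    and le: "\<forall>t\<ge>t0. W' t \<le> A - m * W t"
    and "t0 \<le> t"
  shows "W t \<le> max (W t0) (A / m)"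
proof -
  define F where "F s = (W s - A / m) * exp (m * s)" for s
  have "F t \<le> F t0"
  proof (rule DERIV_nonpos_imp_nonincreasing[OF \<open>t0 \<le> t\<close>])
    fix s assume s: "t0 \<le> s" "s \<le> t"
    have "(F has_real_derivative (W' s + m * W s - A) * exp (m * s)) (at s)"
      unfolding F_def using deriv s \<open>0 < m\<close>
      by (auto intro!: derivative_eq_intros simp: field_simps)
    moreover have "(W' s + m * W s - A) * exp (m * s) \<le> 0"
      using le s by (intro mult_nonpos_nonneg) auto
    ultimately show "\<exists>y. (F has_real_derivative y) (at s) \<and> y \<le> 0"
      by blast
  qed
  then have "(W t - A / m) * exp (m * t) \<le> (W t0 - A / m) * exp (m * t0)"
    unfolding F_def .
  also have "\<dots> \<le> max 0 (W t0 - A / m) * exp (m * t)"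
    using \<open>0 < m\<close> \<open>t0 \<le> t\<close> by (intro mult_mono) auto
  finally have "W t - A / m \<le> max 0 (W t0 - A / m)"
    by simp
  then show ?thesis
    by linarith
qed

lemma deriv_nonpos_at_first_zero:
  fixes Y :: "real \<Rightarrow> real"
  assumes "(Y has_real_derivative D) (at t)" "Y t = 0" "0 < t" "\<forall>u\<in>{0..<t}. 0 < Y u"
  shows "D \<le> 0"
proof (rule ccontr)
  assume "\<not> D \<le> 0"
  then obtain d where d: "0 < d" "\<forall>e>0. e < d \<longrightarrow> Y (t - e) < Y t"
    using DERIV_pos_inc_left[OF assms(1)] by force
  then have "Y (t - min (d/2) (t/2)) < 0"
    using assms(2,3) by simp
  moreover have "0 < Y (t - min (d/2) (t/2))"
    using assms(3,4) d(1) by simp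
  ultimately show False
    by simp
qed

lemma exists_first_zero:
  fixes G :: "real \<Rightarrow> real"
  assumes "continuous_on {0..T} G" "0 < G 0" "t \<in> {0..T}" "G t \<le> 0"
  shows "\<exists>t1\<in>{0<..t}. G t1 = 0 \<and> (\<forall>u\<in>{0..<t1}. 0 < G u)"
proof -
  define S where "S = {0..t} \<inter> G -` {..0}"
  have cont: "continuous_on {0..t} G"
    using assms(1,3) by (auto intro: continuous_on_subset)
  have "t \<in> S" "closed S"
    unfolding S_def using assms(3,4) by (auto intro!: continuous_closed_preimage cont)
  define t1 where "t1 = Inf S"
  have "t1 \<in> S"
    unfolding t1_def using \<open>t \<in> S\<close> \<open>closed S\<close>
    by (intro closed_contains_Inf) (auto simp: S_def bdd_below_def)
  have before: "0 < G u" if "u \<in> {0..<t1}" for u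
  proof (rule ccontr)
    assume "\<not> 0 < G u"
    then have "u \<in> S"
      using that \<open>t1 \<in> S\<close> by (auto simp: S_def)
    then have "t1 \<le> u"
      unfolding t1_def by (intro cInf_lower) (auto simp: S_def bdd_below_def)
    with that show False
      by simp
  qed
  have "0 < t1"
    using \<open>t1 \<in> S\<close> assms(2) by (auto simp: S_def less_eq_real_def)
  have "G t1 = 0"
  proof (rule ccontr)
    assume "G t1 \<noteq> 0"
    then have "G t1 < 0"
      using \<open>t1 \<in> S\<close> by (simp add: S_def)
    moreover have "continuous_on {0..t1} G"
      using cont \<open>t1 \<in> S\<close> by (auto simp: S_def intro: continuous_on_subset)
    ultimately obtain u where "0 \<le> u" "u \<le> t1" "G u = 0"
      using IVT2'[of G t1 0 0] assms(2) \<open>0 < t1\<close> by force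
    with before \<open>G t1 \<noteq> 0\<close> show False
      by (metis atLeastLessThan_iff less_eq_real_def less_irrefl)
  qed
  then show ?thesis
    using \<open>t1 \<in> S\<close> \<open>0 < t1\<close> before by (auto simp: S_def)
qed

lemma first_zero_of_pair:
  fixes Y V :: "real \<Rightarrow> real"
  assumes "continuous_on {0..T} Y" "continuous_on {0..T} V" "0 < Y 0" "0 < V 0"
    and "t \<in> {0..T}" "\<not> (0 < Y t \<and> 0 < V t)"
  obtains t1 where "t1 \<in> {0<..t}" "0 \<le> Y t1" "0 \<le> V t1" "Y t1 = 0 \<or> V t1 = 0"
    "\<forall>u\<in>{0..<t1}. 0 < Y u" "\<forall>u\<in>{0..<t1}. 0 < V u"
proof -
  define G where "G u = min (Y u) (V u)" for u
  have "continuous_on {0..T} G"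
    unfolding G_def using assms(1,2) by (intro continuous_intros)
  moreover have "0 < G 0" "G t \<le> 0"
    using assms(3,4,6) by (auto simp: G_def)
  ultimately obtain t1 where "t1 \<in> {0<..t}" "G t1 = 0" and before: "\<forall>u\<in>{0..<t1}. 0 < G u"
    using exists_first_zero assms(5) by blast
  moreover have "0 \<le> Y t1" "0 \<le> V t1" "Y t1 = 0 \<or> V t1 = 0"
    using \<open>G t1 = 0\<close> unfolding G_def by (metis min.cobounded1 min.cobounded2 min_def)+
  moreover have "\<forall>u\<in>{0..<t1}. 0 < Y u" "\<forall>u\<in>{0..<t1}. 0 < V u"
    using before by (simp_all add: G_def)
  ultimately show ?thesis
    using that by blast
qed

lemma pos_near_left_endpoint:
  fixes g :: "real \<Rightarrow> real"
  assumes "continuous_on {a..c} g" "a < c" "0 < g a"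
  shows "\<exists>\<eta>>0. \<forall>t\<in>{a..<a+\<eta>}. 0 < g t"
proof -
  obtain r where r: "0 < r" "\<forall>t\<in>{a..c}. dist t a < r \<longrightarrow> dist (g t) (g a) < g a"
    using assms(1,2,3) unfolding continuous_on_iff by (meson atLeastAtMost_iff less_imp_le order_refl)
  show ?thesis
  proof (intro exI[of _ "min r (c - a)"] conjI ballI)
    show "0 < min r (c - a)"
      using r(1) assms(2) by simp
    fix t assume "t \<in> {a..<a + min r (c - a)}"
    then have "t \<in> {a..c}" "dist t a < r"
      by (auto simp: dist_real_def)
    then have "dist (g t) (g a) < g a"
      using r(2) by blast
    then show "0 < g t"
      by (simp add: dist_real_def)
  qed
qed

lemma perturbed_pos_lower_bound:
  fixes g E :: "real \<Rightarrow> real"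
  assumes "mono E" "\<forall>u\<in>{a..0}. 0 \<le> g u" "\<forall>u\<in>{0..<t}. 0 < g u + E u" "0 \<le> g t + E t"
    and "0 < E t" "u \<in> {a..t}"
  shows "- E t \<le> g u"
proof (cases "u \<le> 0")
  case True
  then show ?thesis
    using assms(2,5,6) by force
next
  case False
  show ?thesis
  proof (cases "u = t")
    case False
    then have "0 < g u + E u"
      using assms(3,6) \<open>\<not> u \<le> 0\<close> by auto
    moreover have "E u \<le> E t"
      using assms(1,6) by (auto dest: monoD)
    ultimately show ?thesis
      by linarith
  qed (use assms(4) in simp)
qed

section \<open>The delayed infection model\<close>

locale virus_model =
  kernel1: delay_kernel f1 h1 + kernel2: delay_kernel f2 h2
  for f1 h1 f2 h2 +
  fixes s d k kd \<delta> p Nd \<mu> q b z0 :: real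
    and \<phi>1 \<phi>2 \<phi>3 x y v z :: "real \<Rightarrow> real"
  assumes params: "0 < s" "0 < d" "0 < k" "0 < kd" "0 < \<delta>" "0 < p" "0 < Nd" "0 < \<mu>" "0 < q" "0 < b"
    and initial_nonneg: "\<forall>\<theta>\<in>{-max h1 h2..0}. 0 \<le> \<phi>1 \<theta> \<and> 0 \<le> \<phi>2 \<theta> \<and> 0 \<le> \<phi>3 \<theta>"
    and z0_nonneg: "0 \<le> z0"
    and solution: "ddesol s d k kd \<delta> p Nd \<mu> q b h1 h2 f1 f2 \<phi>1 \<phi>2 \<phi>3 z0 x y v z"
begin

abbreviation "hmax \<equiv> max h1 h2"
abbreviation "I1 \<equiv> distributed_delay f1 h1 (\<lambda>u. x u * v u)"
abbreviation "I2 \<equiv> distributed_delay f2 h2 y"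

lemma hmax_pos: "0 < hmax"
  using kernel1.length_pos by simp

lemma le_hmax: "h1 \<le> hmax" "h2 \<le> hmax"
  by simp_all

lemma solution_continuous:
  "continuous_on {-hmax..} x" "continuous_on {-hmax..} y" "continuous_on {-hmax..} v"
  "continuous_on {0..} z"
  using solution unfolding ddesol_def Let_def by auto

lemma initial_data: "\<theta> \<in> {-hmax..0} \<Longrightarrow> x \<theta> = \<phi>1 \<theta> \<and> y \<theta> = \<phi>2 \<theta> \<and> v \<theta> = \<phi>3 \<theta>"
  using solution unfolding ddesol_def Let_def by auto

lemma initial_solution_nonneg: "\<theta> \<in> {-hmax..0} \<Longrightarrow> 0 \<le> x \<theta> \<and> 0 \<le> y \<theta> \<and> 0 \<le> v \<theta>"
  using initial_data initial_nonneg by auto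

lemma z_initial: "z 0 = z0"
  using solution unfolding ddesol_def Let_def by auto

lemma
  assumes "0 < t"
  shows x_deriv: "(x has_real_derivative s - d * x t - k * x t * v t) (at t)"
    and y_deriv: "(y has_real_derivative kd * I1 t - \<delta> * y t - p * y t * z t) (at t)"
    and v_deriv: "(v has_real_derivative Nd * \<delta> * I2 t - \<mu> * v t) (at t)"
    and z_deriv: "(z has_real_derivative q * y t * z t - b * z t) (at t)"
  using solution assms unfolding ddesol_def Let_def distributed_delay_def by (auto simp: mult.assoc)

lemma continuous_on_solution:
  assumes "-hmax \<le> a"
  shows "continuous_on {a..c} x" "continuous_on {a..c} y" "continuous_on {a..c} v"
    "continuous_on {a..c} (\<lambda>u. x u * v u)"
proof -
  have sub: "{a..c} \<subseteq> {-hmax..}"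
    using assms by auto
  show "continuous_on {a..c} x" "continuous_on {a..c} y" "continuous_on {a..c} v"
    using continuous_on_subset[OF solution_continuous(1) sub] continuous_on_subset[OF solution_continuous(2) sub]
      continuous_on_subset[OF solution_continuous(3) sub] by auto
  then show "continuous_on {a..c} (\<lambda>u. x u * v u)"
    by (intro continuous_intros)
qed

lemma continuous_on_z: "0 \<le> a \<Longrightarrow> continuous_on {a..c} z"
  by (rule continuous_on_subset[OF solution_continuous(4)]) auto

lemma x_pos:
  assumes "0 < t"
  shows "0 < x t"
proof (rule linear_ode_pos_of_source_pos[where a = "\<lambda>_. s" and c = "\<lambda>u. d + k * v u", OF assms])
  show "continuous_on {0..t} x" "continuous_on {0..t} (\<lambda>u. d + k * v u)"
    using hmax_pos by (auto intro!: continuous_intros continuous_on_solution)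
  show "\<forall>u\<in>{0<..<t}. (x has_real_derivative s - (d + k * v u) * x u) (at u)"
  proof
    fix u assume "u \<in> {0<..<t}"
    have eq: "s - (d + k * v u) * x u = s - d * x u - k * x u * v u"
      by (simp add: algebra_simps)
    show "(x has_real_derivative s - (d + k * v u) * x u) (at u)"
      unfolding eq using x_deriv \<open>u \<in> {0<..<t}\<close> by simp
  qed
  show "\<forall>u\<in>{0<..<t}. 0 < s"
    using params(1) by simp
  show "0 \<le> x 0"
    using initial_solution_nonneg[of 0] hmax_pos by simp
qed

lemma x_nonneg:
  assumes "-hmax \<le> t"
  shows "0 \<le> x t"
proof (cases "0 < t")
  case True
  then show ?thesis
    using x_pos less_imp_le by blast
next
  case False
  then show ?thesis
    using initial_solution_nonneg[of t] assms by simp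
qed

lemma z_linear_ode:
  assumes "0 \<le> t"
  shows "continuous_on {0..t} z" "continuous_on {0..t} (\<lambda>u. b - q * y u)"
    "\<forall>u\<in>{0<..<t}. (z has_real_derivative 0 - (b - q * y u) * z u) (at u)"
proof -
  show "continuous_on {0..t} z"
    by (rule continuous_on_z) simp
  have "continuous_on {0..t} y"
    using hmax_pos by (intro continuous_on_solution) simp
  then show "continuous_on {0..t} (\<lambda>u. b - q * y u)"
    by (intro continuous_intros)
  show "\<forall>u\<in>{0<..<t}. (z has_real_derivative 0 - (b - q * y u) * z u) (at u)"
  proof
    fix u assume "u \<in> {0<..<t}"
    have eq: "0 - (b - q * y u) * z u = q * y u * z u - b * z u"
      by (simp add: algebra_simps)
    show "(z has_real_derivative 0 - (b - q * y u) * z u) (at u)"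
      unfolding eq using z_deriv \<open>u \<in> {0<..<t}\<close> by simp
  qed
qed

lemma z_nonneg: "0 \<le> t \<Longrightarrow> 0 \<le> z t"
  by (rule linear_ode_nonneg[OF _ z_linear_ode]) (auto simp: z_initial z0_nonneg)

lemma z_pos: "0 < z0 \<Longrightarrow> 0 \<le> t \<Longrightarrow> 0 < z t"
  by (rule linear_ode_pos[OF _ z_linear_ode]) (auto simp: z_initial)

lemma y_deriv_pos_at_perturbed_zero:
  assumes "0 < t" "0 < e" "y t = - e" "kd * X < L"
    and "\<forall>u\<in>{t-h1..t}. x u \<le> X" "\<forall>u\<in>{t-h1..t}. - e \<le> v u"
  shows "0 < kd * I1 t - \<delta> * y t - p * y t * z t + L * e"
proof -
  have "- (X * e) \<le> x u * v u" if u: "u \<in> {t-h1..t}" for u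
  proof -
    have "0 \<le> x u"
      using u \<open>0 < t\<close> by (intro x_nonneg) auto
    then have "x u * (- e) \<le> x u * v u"
      using assms(6) u by (intro mult_left_mono) auto
    moreover have "X * (- e) \<le> x u * (- e)"
      using assms(2,5) u by (intro mult_right_mono_neg) auto
    ultimately show ?thesis
      by simp
  qed
  then have "- (X * e) \<le> I1 t"
    using \<open>0 < t\<close> by (intro kernel1.distributed_delay_ge continuous_on_solution) auto
  then have "- (kd * X * e) \<le> kd * I1 t"
    using params(4) by (metis mult_left_mono less_imp_le mult_minus_right mult.assoc)
  moreover have "0 \<le> - \<delta> * y t - p * y t * z t"
    using assms(2,3) params(5,6) z_nonneg[of t] \<open>0 < t\<close> by (simp add: algebra_simps)
  moreover have "kd * X * e < L * e"
    using assms(2,4) by simp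
  ultimately show ?thesis
    by linarith
qed

lemma v_deriv_pos_at_perturbed_zero:
  assumes "0 < t" "0 < e" "v t = - e" "Nd * \<delta> < L" "\<forall>u\<in>{t-h2..t}. - e \<le> y u"
  shows "0 < Nd * \<delta> * I2 t - \<mu> * v t + L * e"
proof -
  have "- e \<le> I2 t"
    using assms(1,5) by (intro kernel2.distributed_delay_ge continuous_on_solution) auto
  then have "- (Nd * \<delta> * e) \<le> Nd * \<delta> * I2 t"
    using params(5,7) by (metis mult_left_mono less_imp_le mult_pos_pos mult_minus_right)
  moreover have "0 \<le> - \<mu> * v t"
    using assms(2,3) params(8) by simp
  moreover have "Nd * \<delta> * e < L * e"
    using assms(2,4) by simp
  ultimately show ?thesis
    by linarith
qed

lemma y_v_perturbed_pos:
  assumes "0 < \<epsilon>" "0 \<le> X" "\<forall>u\<in>{-hmax..T}. x u \<le> X" "t \<in> {0..T}"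
  defines "E \<equiv> \<lambda>u. \<epsilon> * exp ((kd * X + Nd * \<delta> + 1) * u)"
  shows "0 < y t + E t \<and> 0 < v t + E t"
proof (rule ccontr)
  define L where "L = kd * X + Nd * \<delta> + 1"
  have "kd * X < L" "Nd * \<delta> < L"
    unfolding L_def using assms(2) params(4,5,7) by (simp_all add: add_nonneg_pos add_pos_pos)
  have E_pos: "0 < E u" for u
    unfolding E_def using assms(1) by simp
  have "0 < L"
    using \<open>kd * X < L\<close> assms(2) params(4) by (smt (verit) mult_nonneg_nonneg)
  then have "mono E"
    unfolding E_def L_def[symmetric] using assms(1) by (intro monoI) simp
  have E_deriv: "(E has_real_derivative L * E u) (at u)" for u
    unfolding E_def L_def by (auto intro!: derivative_eq_intros)
  assume "\<not> (0 < y t + E t \<and> 0 < v t + E t)"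
  moreover have "continuous_on {0..T} (\<lambda>u. y u + E u)" "continuous_on {0..T} (\<lambda>u. v u + E u)"
    unfolding E_def using hmax_pos by (intro continuous_intros continuous_on_solution; simp)+
  moreover have "0 < y 0 + E 0" "0 < v 0 + E 0"
    using initial_solution_nonneg[of 0] hmax_pos E_pos[of 0] by auto
  ultimately obtain t1 where t1: "t1 \<in> {0<..t}" "0 \<le> y t1 + E t1" "0 \<le> v t1 + E t1"
    "y t1 + E t1 = 0 \<or> v t1 + E t1 = 0"
    and before_y: "\<forall>u\<in>{0..<t1}. 0 < y u + E u" and before_v: "\<forall>u\<in>{0..<t1}. 0 < v u + E u"
    using first_zero_of_pair[of T "\<lambda>u. y u + E u" "\<lambda>u. v u + E u"] assms(4) by blast
  have "\<forall>u\<in>{-hmax..0}. 0 \<le> y u" "\<forall>u\<in>{-hmax..0}. 0 \<le> v u"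
    using initial_solution_nonneg by auto
  then have lower: "- E t1 \<le> y u" "- E t1 \<le> v u" if "u \<in> {-hmax..t1}" for u
    using perturbed_pos_lower_bound[OF \<open>mono E\<close> _ before_y t1(2) E_pos that]
      perturbed_pos_lower_bound[OF \<open>mono E\<close> _ before_v t1(3) E_pos that]
    by simp_all
  have "0 < t1"
    using t1(1) by simp
  from t1(4) show False
  proof
    assume "y t1 + E t1 = 0"
    then have "kd * I1 t1 - \<delta> * y t1 - p * y t1 * z t1 + L * E t1 \<le> 0"
      using before_y \<open>0 < t1\<close> by (intro deriv_nonpos_at_first_zero[OF DERIV_add[OF y_deriv E_deriv]]) auto
    moreover have "0 < kd * I1 t1 - \<delta> * y t1 - p * y t1 * z t1 + L * E t1"
      using \<open>0 < t1\<close> \<open>y t1 + E t1 = 0\<close> E_pos \<open>kd * X < L\<close> assms(3,4) t1(1) lower(2)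
      by (intro y_deriv_pos_at_perturbed_zero) auto
    ultimately show False
      by linarith
  next
    assume "v t1 + E t1 = 0"
    then have "Nd * \<delta> * I2 t1 - \<mu> * v t1 + L * E t1 \<le> 0"
      using before_v \<open>0 < t1\<close> by (intro deriv_nonpos_at_first_zero[OF DERIV_add[OF v_deriv E_deriv]]) auto
    moreover have "0 < Nd * \<delta> * I2 t1 - \<mu> * v t1 + L * E t1"
      using \<open>0 < t1\<close> \<open>v t1 + E t1 = 0\<close> E_pos \<open>Nd * \<delta> < L\<close> lower(1)
      by (intro v_deriv_pos_at_perturbed_zero) auto
    ultimately show False
      by linarith
  qed
qed

lemma y_v_nonneg:
  assumes "-hmax \<le> t"
  shows "0 \<le> y t \<and> 0 \<le> v t"
proof (cases "t \<le> 0")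
  case True
  then show ?thesis
    using initial_solution_nonneg[of t] assms by simp
next
  case False
  obtain u0 where u0: "u0 \<in> {-hmax..t}" "\<forall>u\<in>{-hmax..t}. x u \<le> x u0"
    using continuous_attains_sup[OF compact_Icc _ continuous_on_solution(1)[of "-hmax" t]] assms by auto
  define L where "L = kd * x u0 + Nd * \<delta> + 1"
  have "0 \<le> x u0"
    using u0(1) by (intro x_nonneg) simp
  have perturbed: "0 \<le> y t + e \<and> 0 \<le> v t + e" if "0 < e" for e
  proof -
    have "0 < y t + e / exp (L * t) * exp (L * t) \<and> 0 < v t + e / exp (L * t) * exp (L * t)"
      unfolding L_def using that False \<open>0 \<le> x u0\<close> u0(2)
      by (intro y_v_perturbed_pos) auto
    then show ?thesis
      by simp
  qed
  show ?thesis
    using perturbed by (auto intro: field_le_epsilon)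
qed

lemma I1_nonneg: "0 \<le> t \<Longrightarrow> 0 \<le> I1 t"
  using kernel1.length_pos x_nonneg y_v_nonneg
  by (intro kernel1.distributed_delay_ge continuous_on_solution ballI mult_nonneg_nonneg) auto

lemma I2_nonneg: "0 \<le> t \<Longrightarrow> 0 \<le> I2 t"
  using kernel2.length_pos y_v_nonneg
  by (intro kernel2.distributed_delay_ge continuous_on_solution ballI) auto

lemma y_linear_ode:
  assumes "0 \<le> t0"
  shows "continuous_on {t0..t1} y" "continuous_on {t0..t1} (\<lambda>u. \<delta> + p * z u)"
    "\<forall>u\<in>{t0<..<t1}. (y has_real_derivative kd * I1 u - (\<delta> + p * z u) * y u) (at u)"
proof -
  show "continuous_on {t0..t1} y"
    using assms hmax_pos by (intro continuous_on_solution) simp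
  show "continuous_on {t0..t1} (\<lambda>u. \<delta> + p * z u)"
    using assms by (intro continuous_intros continuous_on_z)
  show "\<forall>u\<in>{t0<..<t1}. (y has_real_derivative kd * I1 u - (\<delta> + p * z u) * y u) (at u)"
  proof
    fix u assume "u \<in> {t0<..<t1}"
    have eq: "kd * I1 u - (\<delta> + p * z u) * y u = kd * I1 u - \<delta> * y u - p * y u * z u"
      by (simp add: algebra_simps)
    show "(y has_real_derivative kd * I1 u - (\<delta> + p * z u) * y u) (at u)"
      unfolding eq using y_deriv assms \<open>u \<in> {t0<..<t1}\<close> by simp
  qed
qed

lemma v_linear_ode:
  assumes "0 \<le> t0"
  shows "continuous_on {t0..t1} v" "continuous_on {t0..t1} (\<lambda>_. \<mu>)"
    "\<forall>u\<in>{t0<..<t1}. (v has_real_derivative Nd * \<delta> * I2 u - \<mu> * v u) (at u)"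
  using assms hmax_pos v_deriv by (auto intro: continuous_on_solution)

lemma y_pos_of_pos: "0 \<le> t0 \<Longrightarrow> t0 \<le> t1 \<Longrightarrow> 0 < y t0 \<Longrightarrow> 0 < y t1"
  by (rule linear_ode_pos[OF _ y_linear_ode]) (use I1_nonneg params(4) in auto)

lemma v_pos_of_pos: "0 \<le> t0 \<Longrightarrow> t0 \<le> t1 \<Longrightarrow> 0 < v t0 \<Longrightarrow> 0 < v t1"
  by (rule linear_ode_pos[OF _ v_linear_ode]) (use I2_nonneg params(5,7) in auto)

lemma y_pos_of_I1_pos: "0 \<le> t0 \<Longrightarrow> t0 < t1 \<Longrightarrow> \<forall>u\<in>{t0<..<t1}. 0 < I1 u \<Longrightarrow> 0 < y t1"
  by (rule linear_ode_pos_of_source_pos[OF _ y_linear_ode]) (use y_v_nonneg hmax_pos params(4) in auto)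

lemma v_pos_of_I2_pos: "0 \<le> t0 \<Longrightarrow> t0 < t1 \<Longrightarrow> \<forall>u\<in>{t0<..<t1}. 0 < I2 u \<Longrightarrow> 0 < v t1"
  by (rule linear_ode_pos_of_source_pos[OF _ v_linear_ode]) (use y_v_nonneg hmax_pos params(5,7) in auto)

lemma y_pos_of_initial:
  assumes "0 < y 0 + I1 0" "0 < t"
  shows "0 < y t"
proof (cases "0 < y 0")
  case True
  then show ?thesis
    using y_pos_of_pos[of 0 t] assms(2) by simp
next
  case False
  have "continuous_on {-h1+h1..1} I1"
    using kernel1.length_pos by (intro kernel1.continuous_on_distributed_delay continuous_on_solution) simp
  then obtain \<eta> where "0 < \<eta>" "\<forall>u\<in>{0..<\<eta>}. 0 < I1 u"
    using pos_near_left_endpoint[of 0 1 I1] False assms(1) by auto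
  then have "0 < y (min (\<eta>/2) t)"
    using assms(2) by (intro y_pos_of_I1_pos[of 0]) auto
  then show ?thesis
    using \<open>0 < \<eta>\<close> assms(2) y_pos_of_pos[of "min (\<eta>/2) t" t] by simp
qed

lemma v_pos_of_initial:
  assumes "0 < v 0 + I2 0" "0 < t"
  shows "0 < v t"
proof (cases "0 < v 0")
  case True
  then show ?thesis
    using v_pos_of_pos[of 0 t] assms(2) by simp
next
  case False
  have "continuous_on {-h2+h2..1} I2"
    using kernel2.length_pos by (intro kernel2.continuous_on_distributed_delay continuous_on_solution) simp
  then obtain \<eta> where "0 < \<eta>" "\<forall>u\<in>{0..<\<eta>}. 0 < I2 u"
    using pos_near_left_endpoint[of 0 1 I2] False assms(1) by auto
  then have "0 < v (min (\<eta>/2) t)"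
    using assms(2) by (intro v_pos_of_I2_pos[of 0]) auto
  then show ?thesis
    using \<open>0 < \<eta>\<close> assms(2) v_pos_of_pos[of "min (\<eta>/2) t" t] by simp
qed

lemma v_pos_after_delay:
  assumes "\<forall>u>0. 0 < y u" "h2 < t"
  shows "0 < v t"
proof (rule v_pos_of_I2_pos[of h2])
  show "\<forall>u\<in>{h2<..<t}. 0 < I2 u"
  proof
    fix u assume "u \<in> {h2<..<t}"
    then have "-hmax \<le> u - h2" "\<forall>w\<in>{u-h2..u}. 0 < y w"
      using assms(1) le_hmax kernel2.length_pos by auto
    then show "0 < I2 u"
      by (intro kernel2.distributed_delay_pos continuous_on_solution)
  qed
qed (use assms(2) kernel2.length_pos in auto)

lemma y_pos_after_delay:
  assumes "\<forall>u>0. 0 < v u" "h1 < t"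
  shows "0 < y t"
proof (rule y_pos_of_I1_pos[of h1])
  show "\<forall>u\<in>{h1<..<t}. 0 < I1 u"
  proof
    fix u assume "u \<in> {h1<..<t}"
    then have "-hmax \<le> u - h1" "\<forall>w\<in>{u-h1..u}. 0 < x w * v w"
      using assms(1) x_pos le_hmax kernel1.length_pos by auto
    then show "0 < I1 u"
      by (intro kernel1.distributed_delay_pos continuous_on_solution)
  qed
qed (use assms(2) kernel1.length_pos in auto)

lemma pos_after_delay:
  assumes "0 < z0" "0 < y 0 + I1 0 \<or> 0 < v 0 + I2 0" "hmax < t"
  shows "0 < x t \<and> 0 < y t \<and> 0 < v t \<and> 0 < z t"
proof -
  have "0 < y t \<and> 0 < v t"
    using assms(2)
  proof
    assume "0 < y 0 + I1 0"
    then have "\<forall>u>0. 0 < y u"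
      using y_pos_of_initial by blast
    then show ?thesis
      using v_pos_after_delay assms(3) hmax_pos by auto
  next
    assume "0 < v 0 + I2 0"
    then have "\<forall>u>0. 0 < v u"
      using v_pos_of_initial by blast
    then show ?thesis
      using y_pos_after_delay assms(3) hmax_pos by auto
  qed
  moreover have "0 < x t" "0 < z t"
    using x_pos z_pos assms(1,3) hmax_pos by auto
  ultimately show ?thesis
    by simp
qed

lemma I1_initial: "integral {0..h1} (\<lambda>\<tau>. f1 \<tau> * \<phi>1 (-\<tau>) * \<phi>3 (-\<tau>)) = I1 0"
  unfolding distributed_delay_def using initial_data by (intro integral_cong) (auto simp: mult.assoc)

lemma I2_initial: "integral {0..h2} (\<lambda>\<tau>. f2 \<tau> * \<phi>2 (-\<tau>)) = I2 0"
  unfolding distributed_delay_def using initial_data by (intro integral_cong) auto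

abbreviation "X1 \<equiv> distributed_delay f1 h1 x"

lemma X1_deriv:
  assumes "h1 < t"
  shows "(X1 has_real_derivative s - d * X1 t - k * I1 t) (at t)"
proof -
  define r where "r = (t - h1) / 2"
  have "0 < r"
    using assms by (simp add: r_def)
  have "t - h1 - r = r"
    by (simp add: r_def field_simps)
  then have pos: "0 < u" if "u \<in> {t-h1-r..t+r}" for u
    using that \<open>0 < r\<close> by auto
  have cont: "continuous_on {a..c} x" "continuous_on {a..c} (\<lambda>u. x u * v u)" if "-hmax \<le> a" for a c
    using that by (auto intro: continuous_on_solution)
  have "-hmax \<le> t - h1"
    using assms hmax_pos by simp
  have "(X1 has_real_derivative distributed_delay f1 h1 (\<lambda>u. s - d * x u - k * (x u * v u)) t) (at t)"
  proof (rule kernel1.has_real_derivative_distributed_delay[OF \<open>0 < r\<close>])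
    show "\<forall>u\<in>{t-h1-r..t+r}. (x has_real_derivative s - d * x u - k * (x u * v u)) (at u)"
      using x_deriv pos by (simp add: mult.assoc)
    have "-hmax \<le> t - h1 - r"
      using \<open>t - h1 - r = r\<close> \<open>0 < r\<close> hmax_pos by simp
    then show "continuous_on {t-h1-r..t+r} (\<lambda>u. s - d * x u - k * (x u * v u))"
      by (intro continuous_intros cont)
  qed
  moreover have "distributed_delay f1 h1 (\<lambda>u. s - d * x u - k * (x u * v u)) t = s - d * X1 t - k * I1 t"
    using \<open>-hmax \<le> t - h1\<close>
    by (simp add: kernel1.distributed_delay_diff kernel1.distributed_delay_cmult cont continuous_intros)
  ultimately show ?thesis
    by simp
qed

text \<open>The weights of W cancel the infection terms k x v, kd I1 and p y z between the equations.\<close>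

definition W :: "real \<Rightarrow> real" where
  "W t = kd / k * X1 t + y t + p / q * z t"

lemma W_summands_nonneg:
  assumes "0 \<le> t"
  shows "0 \<le> kd / k * X1 t" "0 \<le> y t" "0 \<le> p / q * z t"
proof -
  have "0 \<le> X1 t"
    using assms le_hmax(1) x_nonneg by (intro kernel1.distributed_delay_ge continuous_on_solution) auto
  then show "0 \<le> kd / k * X1 t"
    using params(3,4) by simp
  show "0 \<le> y t" "0 \<le> p / q * z t"
    using assms hmax_pos params(6,9) y_v_nonneg[of t] z_nonneg[of t] by auto
qed

lemma W_deriv:
  assumes "h1 < t"
  shows "(W has_real_derivative kd * s / k - d * (kd / k * X1 t) - \<delta> * y t - b * (p / q * z t)) (at t)"
proof -
  have "0 < t"
    using assms kernel1.length_pos by simp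
  have "(W has_real_derivative kd / k * (s - d * X1 t - k * I1 t) + (kd * I1 t - \<delta> * y t - p * y t * z t)
      + p / q * (q * y t * z t - b * z t)) (at t)"
    unfolding W_def[abs_def]
    by (intro DERIV_add DERIV_cmult X1_deriv y_deriv z_deriv assms \<open>0 < t\<close>)
  moreover have "kd / k * (s - d * X1 t - k * I1 t) + (kd * I1 t - \<delta> * y t - p * y t * z t)
      + p / q * (q * y t * z t - b * z t) = kd * s / k - d * (kd / k * X1 t) - \<delta> * y t - b * (p / q * z t)"
    using params(3,9) by (simp add: field_simps)
  ultimately show ?thesis
    by (simp only:)
qed

lemma W_bounded: "\<exists>B. \<forall>t\<ge>h1 + 1. W t \<le> B"
proof -
  define m where "m = min d (min \<delta> b)"
  have "0 < m"
    using params(2,5,10) by (simp add: m_def)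
  have "kd * s / k - d * (kd / k * X1 t) - \<delta> * y t - b * (p / q * z t) \<le> kd * s / k - m * W t"
    if "h1 + 1 \<le> t" for t
  proof -
    have "0 \<le> t"
      using that kernel1.length_pos by simp
    have "m \<le> d" "m \<le> \<delta>" "m \<le> b"
      by (simp_all add: m_def)
    note nonneg = W_summands_nonneg[OF \<open>0 \<le> t\<close>]
    have "m * (kd / k * X1 t) \<le> d * (kd / k * X1 t)" "m * y t \<le> \<delta> * y t"
      "m * (p / q * z t) \<le> b * (p / q * z t)"
      using mult_right_mono[OF \<open>m \<le> d\<close> nonneg(1)] mult_right_mono[OF \<open>m \<le> \<delta>\<close> nonneg(2)]
        mult_right_mono[OF \<open>m \<le> b\<close> nonneg(3)] .
    then show ?thesis
      unfolding W_def by (simp add: algebra_simps)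
  qed
  then have "W t \<le> max (W (h1 + 1)) (kd * s / k / m)" if "h1 + 1 \<le> t" for t
    using that W_deriv \<open>0 < m\<close> by (intro le_max_of_deriv_le_affine[where W' = "\<lambda>t. kd * s / k - d * (kd / k * X1 t) - \<delta> * y t - b * (p / q * z t)"]) auto
  then show ?thesis
    by blast
qed

lemma y_z_bounded: "\<exists>B. \<forall>t\<ge>h1 + 1. y t \<le> B \<and> z t \<le> B"
proof -
  obtain B where B: "\<forall>t\<ge>h1 + 1. W t \<le> B"
    using W_bounded by blast
  have "y t \<le> max B (q / p * B) \<and> z t \<le> max B (q / p * B)" if "h1 + 1 \<le> t" for t
  proof -
    have "0 \<le> t"
      using that kernel1.length_pos by simp
    have "W t \<le> B"
      using B that by simp
    then have "y t \<le> B" "p / q * z t \<le> B"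
      using W_summands_nonneg[OF \<open>0 \<le> t\<close>] unfolding W_def by linarith+
    have "z t = q / p * (p / q * z t)"
      using params(6,9) by simp
    also have "\<dots> \<le> q / p * B"
      using \<open>p / q * z t \<le> B\<close> params(6,9) by (intro mult_left_mono) auto
    finally show ?thesis
      using \<open>y t \<le> B\<close> by (simp add: le_max_iff_disj)
  qed
  then show ?thesis
    by blast
qed

lemma x_bounded: "\<exists>B. \<forall>t\<ge>1. x t \<le> B"
proof -
  have "s - d * x t - k * x t * v t \<le> s - d * x t" if "1 \<le> t" for t
    using that x_nonneg[of t] y_v_nonneg[of t] params(3) hmax_pos by simp
  then have "x t \<le> max (x 1) (s / d)" if "1 \<le> t" for t
    using that x_deriv params(2)
    by (intro le_max_of_deriv_le_affine[where W = x and W' = "\<lambda>t. s - d * x t - k * x t * v t"]) auto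
  then show ?thesis
    by blast
qed

lemma v_bounded: "\<exists>B T. \<forall>t\<ge>T. v t \<le> B"
proof -
  obtain B where B: "\<forall>t\<ge>h1 + 1. y t \<le> B"
    using y_z_bounded by blast
  define T where "T = h1 + 1 + h2"
  have "Nd * \<delta> * I2 t - \<mu> * v t \<le> Nd * \<delta> * B - \<mu> * v t" if "T \<le> t" for t
  proof -
    have "I2 t \<le> B"
      using that B le_hmax kernel1.length_pos
      by (intro kernel2.distributed_delay_le continuous_on_solution) (auto simp: T_def)
    then show ?thesis
      using params(5,7) by simp
  qed
  then have "v t \<le> max (v T) (Nd * \<delta> * B / \<mu>)" if "T \<le> t" for t
    using that v_deriv params(8) kernel1.length_pos kernel2.length_pos
    by (intro le_max_of_deriv_le_affine[where W = v and W' = "\<lambda>t. Nd * \<delta> * I2 t - \<mu> * v t"])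
      (auto simp: T_def)
  then show ?thesis
    by blast
qed

lemma eventually_bounded: "\<exists>M>0. \<exists>T. \<forall>t\<ge>T. x t \<le> M \<and> y t \<le> M \<and> v t \<le> M \<and> z t \<le> M"
proof -
  obtain Bx where Bx: "\<forall>t\<ge>1. x t \<le> Bx"
    using x_bounded by blast
  obtain Byz where Byz: "\<forall>t\<ge>h1 + 1. y t \<le> Byz \<and> z t \<le> Byz"
    using y_z_bounded by blast
  obtain Bv Tv where Bv: "\<forall>t\<ge>Tv. v t \<le> Bv"
    using v_bounded by blast
  define M where "M = max 1 (max Bx (max Byz Bv))"
  have "x t \<le> M \<and> y t \<le> M \<and> v t \<le> M \<and> z t \<le> M" if "max (h1 + 1) Tv \<le> t" for t
  proof -
    have "1 \<le> t" "h1 + 1 \<le> t" "Tv \<le> t"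
      using that kernel1.length_pos by auto
    then show ?thesis
      using Bx Byz Bv by (auto simp: M_def)
  qed
  moreover have "0 < M"
    by (simp add: M_def)
  ultimately show ?thesis
    by blast
qed

end

theorem lemma2p1:
  fixes s d k kd \<delta> p Nd \<mu> q b h1 h2 z0 :: real
    and f1 f2 \<phi>1 \<phi>2 \<phi>3 x y v z :: "real \<Rightarrow> real"
  assumes pars: "s > 0" "d > 0" "k > 0" "kd > 0" "\<delta> > 0" "p > 0" "Nd > 0" "\<mu> > 0" "q > 0" "b > 0"
    and h: "h1 > 0" "h2 > 0"
    and f1: "\<forall>\<tau>\<in>{0..h1}. f1 \<tau> \<ge> 0" "f1 integrable_on {0..h1}" "integral {0..h1} f1 = 1"
    and f2: "\<forall>\<tau>\<in>{0..h2}. f2 \<tau> \<ge> 0" "f2 integrable_on {0..h2}" "integral {0..h2} f2 = 1"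
    and phi: "continuous_on {-max h1 h2..0} \<phi>1" "continuous_on {-max h1 h2..0} \<phi>2"
             "continuous_on {-max h1 h2..0} \<phi>3"
             "\<forall>\<theta>\<in>{-max h1 h2..0}. \<phi>1 \<theta> \<ge> 0 \<and> \<phi>2 \<theta> \<ge> 0 \<and> \<phi>3 \<theta> \<ge> 0"
    and z0: "z0 \<ge> 0"
    and sol: "ddesol s d k kd \<delta> p Nd \<mu> q b h1 h2 f1 f2 \<phi>1 \<phi>2 \<phi>3 z0 x y v z"
  shows "(\<forall>t>0. x t \<ge> 0 \<and> y t \<ge> 0 \<and> v t \<ge> 0 \<and> z t \<ge> 0)
    \<and> ((z0 > 0 \<and>
         (\<phi>2 0 + integral {0..h1} (\<lambda>\<tau>. f1 \<tau> * \<phi>1 (-\<tau>) * \<phi>3 (-\<tau>)) > 0 \<or>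
          \<phi>3 0 + integral {0..h2} (\<lambda>\<tau>. f2 \<tau> * \<phi>2 (-\<tau>)) > 0))
        \<longrightarrow> (\<forall>t > max h1 h2. x t > 0 \<and> y t > 0 \<and> v t > 0 \<and> z t > 0))
    \<and> (\<exists>M>0. \<exists>T. \<forall>t\<ge>T. x t \<le> M \<and> y t \<le> M \<and> v t \<le> M \<and> z t \<le> M)"
proof -
  interpret virus_model f1 h1 f2 h2 s d k kd \<delta> p Nd \<mu> q b z0 \<phi>1 \<phi>2 \<phi>3 x y v z
    using pars f1 f2 phi(4) z0 sol by unfold_locales auto
  have "0 \<le> x t \<and> 0 \<le> y t \<and> 0 \<le> v t \<and> 0 \<le> z t" if "0 < t" for t
    using that x_nonneg y_v_nonneg z_nonneg hmax_pos by simp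
  moreover have "\<phi>2 0 = y 0" "\<phi>3 0 = v 0"
    using initial_data[of 0] hmax_pos by simp_all
  ultimately show ?thesis
    using pos_after_delay eventually_bounded by (simp add: I1_initial I2_initial)
qed

end
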